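(* Let $a,b>0$, let $\chi_a,\chi_b$ be continuous kernels with $\operatorname{supp}\chi_a\subseteq[e^{-a},e^{a}]$ and $\operatorname{supp}\chi_b\subseteq[e^{-b},e^{b}]$, and let $\alpha\in\mathbb{R}$. Define $\chi:\mathbb{R}^+\to\mathbb{R}$ by $$\chi(u):=(1-\alpha)\,\chi_a(2ue^{-a-1})+\alpha\,\chi_b(2ue^{b}),\qquad u\in\mathbb{R}^+.$$ Then $\chi$ is a kernel with $\chi(1)=0$, and for every bounded $f:\mathbb{R}^+\to\mathbb{R}$ and every point $t\in\mathbb{R}^+$ of non-removable jump discontinuity of $f$, $$\lim_{w\to\infty}(S_w^\chi f)(t)=\alpha f(t+0)+(1-\alpha)f(t-0).$$
   Context: Let $\mathbb{R}^+=(0,\infty)$. For $\chi:\mathbb{R}^+\to\mathbb{R}$ and $\nu\ge 0$ set $M_\nu(\chi):=\sup_{u>0}\sum_{k\in\mathbb{Z}}|\chi(e^{-k}u)|\,|k-\log u|^\nu$ (with $|k-\log u|^0:=1$). A kernel is a function $\chi:\mathbb{R}^+\to\mathbb{R}$ such that (K1) $\sum_{k\in\mathbb{Z}}\chi(e^{-k}u)=1$ for every $u\in\mathbb{R}^+$, and (K2) $M_0(\chi)<\infty$ and $M_\nu(\chi)<\infty$ for some $\nu>0$. For a bounded $f:\mathbb{R}^+\to\mathbb{R}$, $w>0$ and $t\in\mathbb{R}^+$, the exponential sampling series is $(S_w^\chi f)(t)=\sum_{k\in\mathbb{Z}}\chi(e^{-k}t^w)\,f(e^{k/w})$. $t$ is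 a non-removable jump discontinuity of $f$ if $f(t+0)=\lim_{p\to0^+}f(t+p)$ and $f(t-0)=\lim_{p\to0^+}f(t-p)$ exist, are finite, and $f(t+0)\ne f(t-0)$. *)

theory Defs
  imports "HOL-Analysis.Analysis"
begin

definition moment_weight :: "real \<Rightarrow> int \<Rightarrow> real \<Rightarrow> real" where
  "moment_weight \<nu> k u = (if \<nu> = 0 then 1 else \<bar>real_of_int k - ln u\<bar> powr \<nu>)"

definition moment_finite :: "(real \<Rightarrow> real) \<Rightarrow> real \<Rightarrow> bool" where
  "moment_finite K \<nu> \<longleftrightarrow>
     (\<exists>C. \<forall>u>0. (\<lambda>k::int. \<bar>K (exp (- real_of_int k) * u)\<bar> * moment_weight \<nu> k u) summable_on UNIV
            \<and> (\<Sum>\<^sub>\<infinity>k::int. \<bar>K (exp (- real_of_int k) * u)\<bar> * moment_weight \<nu> k u) \<le> C)"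

definition kernel :: "(real \<Rightarrow> real) \<Rightarrow> bool" where
  "kernel K \<longleftrightarrow>
     (\<forall>u>0. ((\<lambda>k::int. K (exp (- real_of_int k) * u)) has_sum 1) UNIV)
     \<and> moment_finite K 0 \<and> (\<exists>\<nu>>0. moment_finite K \<nu>)"

definition exp_sampling :: "(real \<Rightarrow> real) \<Rightarrow> real \<Rightarrow> (real \<Rightarrow> real) \<Rightarrow> real \<Rightarrow> real" where
  "exp_sampling K w f t =
     (\<Sum>\<^sub>\<infinity>k::int. K (exp (- real_of_int k) * t powr w) * f (exp (real_of_int k / w)))"

end

theory Submission
  imports Defs
begin

(* The kernel is an affine combination of dilates of two kernels supported in
   [e^-a, e^a] and [e^-b, e^b], so (K1) and M_0 < \<infinity> pass to it, and its bounded
   logarithmic support gives every moment M_\<nu>. In the series at t^w the dilate of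
   chi_a only charges samples e^(k/w) with k/w - ln t in [-(2a+1)/w, (ln 2 - 1)/w],
   i.e. strictly left of t and within O(1/w) of it; the dilate of chi_b only charges
   samples strictly right of t. Each dilate still sums to one, so its sampling series
   is a weighted average of values of f on one side of t and tends to f(t-0),
   respectively f(t+0). *)


lemma summable_on_mult_bounded:
  fixes g h :: "'a \<Rightarrow> real"
  assumes "(\<lambda>k. \<bar>g k\<bar>) summable_on A" and "\<And>k. \<bar>h k\<bar> \<le> M"
  shows "(\<lambda>k. g k * h k) summable_on A"
proof -
  have M: "M \<ge> 0" using assms(2)[of undefined] by linarith
  have "(\<lambda>k. M * \<bar>g k\<bar>) summable_on A" by (rule summable_on_cmult_right[OF assms(1)])
  then have "(\<lambda>k. norm (M * \<bar>g k\<bar>)) summable_on A"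
    by (rule summable_on_iff_abs_summable_on_real[THEN iffD1])
  then have "(\<lambda>k. norm (g k * h k)) summable_on A"
  proof (rule Infinite_Sum.abs_summable_on_comparison_test)
    fix k
    have "\<bar>g k\<bar> * \<bar>h k\<bar> \<le> \<bar>g k\<bar> * M" by (rule mult_left_mono[OF assms(2)]) simp
    then show "norm (g k * h k) \<le> norm (M * \<bar>g k\<bar>)"
      using M by (simp add: abs_mult abs_of_nonneg mult.commute)
  qed
  then show ?thesis by (rule summable_on_iff_abs_summable_on_real[THEN iffD2])
qed

lemma infsum_weighted_deviation_le:
  fixes g h :: "'a \<Rightarrow> real"
  assumes unit: "(g has_sum 1) A" and abs: "(\<lambda>k. \<bar>g k\<bar>) summable_on A"
    and bounded: "\<And>k. \<bar>h k\<bar> \<le> B"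
    and close: "\<And>k. g k \<noteq> 0 \<Longrightarrow> \<bar>h k - L\<bar> \<le> \<epsilon>"
  shows "\<bar>(\<Sum>\<^sub>\<infinity>k\<in>A. g k * h k) - L\<bar> \<le> \<epsilon> * (\<Sum>\<^sub>\<infinity>k\<in>A. \<bar>g k\<bar>)"
proof -
  have g: "g summable_on A" using unit has_sum_imp_summable by blast
  have dev: "(\<lambda>k. g k * (h k - L)) summable_on A"
  proof (rule summable_on_mult_bounded[OF abs])
    show "\<bar>h k - L\<bar> \<le> B + \<bar>L\<bar>" for k
      using bounded[of k] abs_triangle_ineq4[of "h k" L] by linarith
  qed
  then have dev_abs: "(\<lambda>k. \<bar>g k * (h k - L)\<bar>) summable_on A"
    using summable_on_iff_abs_summable_on_real by fastforce
  have "(\<lambda>k. g k * h k) = (\<lambda>k. g k * (h k - L) + L * g k)"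
    by (simp add: algebra_simps)
  then have "(\<Sum>\<^sub>\<infinity>k\<in>A. g k * h k) = (\<Sum>\<^sub>\<infinity>k\<in>A. g k * (h k - L) + L * g k)"
    by simp
  also have "\<dots> = (\<Sum>\<^sub>\<infinity>k\<in>A. g k * (h k - L)) + L"
    using infsumI[OF unit] by (simp add: infsum_add[OF dev summable_on_cmult_right[OF g]] infsum_cmult_right')
  finally have "\<bar>(\<Sum>\<^sub>\<infinity>k\<in>A. g k * h k) - L\<bar> = \<bar>\<Sum>\<^sub>\<infinity>k\<in>A. g k * (h k - L)\<bar>"
    by linarith
  also have "\<dots> \<le> (\<Sum>\<^sub>\<infinity>k\<in>A. \<bar>g k * (h k - L)\<bar>)"
    using norm_infsum_bound[of "\<lambda>k. g k * (h k - L)" A, unfolded real_norm_def] dev_abs by blast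
  also have "\<dots> \<le> (\<Sum>\<^sub>\<infinity>k\<in>A. \<epsilon> * \<bar>g k\<bar>)"
  proof (rule infsum_mono[OF dev_abs summable_on_cmult_right[OF abs]])
    show "\<bar>g k * (h k - L)\<bar> \<le> \<epsilon> * \<bar>g k\<bar>" for k
    proof (cases "g k = 0")
      case False
      then show ?thesis
        using mult_left_mono[OF close abs_ge_zero[of "g k"]] by (simp add: abs_mult mult.commute)
    qed simp
  qed
  also have "\<dots> = \<epsilon> * (\<Sum>\<^sub>\<infinity>k\<in>A. \<bar>g k\<bar>)" by (rule infsum_cmult_right')
  finally show ?thesis .
qed

lemma tendsto_infsum_weighted_average:
  fixes g h :: "'w \<Rightarrow> 'a \<Rightarrow> real"
  assumes unit: "\<forall>\<^sub>F w in F. (g w has_sum 1) UNIV"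
    and abs: "\<forall>\<^sub>F w in F. (\<lambda>k. \<bar>g w k\<bar>) summable_on UNIV \<and> (\<Sum>\<^sub>\<infinity>k. \<bar>g w k\<bar>) \<le> C"
    and bounded: "\<And>w k. \<bar>h w k\<bar> \<le> B"
    and close: "\<And>\<epsilon>. \<epsilon> > 0 \<Longrightarrow> \<forall>\<^sub>F w in F. \<forall>k. g w k \<noteq> 0 \<longrightarrow> \<bar>h w k - L\<bar> \<le> \<epsilon>"
  shows "((\<lambda>w. \<Sum>\<^sub>\<infinity>k. g w k * h w k) \<longlongrightarrow> L) F"
proof (rule tendstoI)
  fix e :: real assume "e > 0"
  define \<epsilon> where "\<epsilon> = e / (2 * (\<bar>C\<bar> + 1))"
  have "\<epsilon> * (\<bar>C\<bar> + 1) = e / 2"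
    unfolding \<epsilon>_def by (simp add: field_simps add_pos_nonneg)
  then have \<epsilon>: "\<epsilon> > 0" "\<epsilon> * (\<bar>C\<bar> + 1) < e"
    using \<open>e > 0\<close> by (simp add: \<epsilon>_def add_pos_nonneg, linarith)
  show "\<forall>\<^sub>F w in F. dist (\<Sum>\<^sub>\<infinity>k. g w k * h w k) L < e"
    using unit abs close[OF \<open>\<epsilon> > 0\<close>]
  proof eventually_elim
    case (elim w)
    then have "\<bar>(\<Sum>\<^sub>\<infinity>k. g w k * h w k) - L\<bar> \<le> \<epsilon> * (\<Sum>\<^sub>\<infinity>k. \<bar>g w k\<bar>)"
      by (intro infsum_weighted_deviation_le[where h = "h w", OF _ _ bounded]) blast+
    also have "\<dots> \<le> \<epsilon> * (\<bar>C\<bar> + 1)"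
      using elim \<epsilon>(1) by (intro mult_left_mono) linarith+
    finally show ?case using \<epsilon> by (simp add: dist_real_def)
  qed
qed

lemma moment_finite_zero_iff:
  "moment_finite K 0 \<longleftrightarrow> (\<exists>C. \<forall>u>0.
     (\<lambda>k::int. \<bar>K (exp (- real_of_int k) * u)\<bar>) summable_on UNIV \<and>
     (\<Sum>\<^sub>\<infinity>k::int. \<bar>K (exp (- real_of_int k) * u)\<bar>) \<le> C)"
  by (simp add: moment_finite_def moment_weight_def)

lemma kernel_has_sum_one_dilate:
  assumes "kernel G" and "c > 0" and "u > 0"
  shows "((\<lambda>k::int. G (c * (exp (- real_of_int k) * u))) has_sum 1) UNIV"
proof -
  have "((\<lambda>k::int. G (exp (- real_of_int k) * (c * u))) has_sum 1) UNIV"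
    using assms by (simp add: kernel_def)
  then show ?thesis by (simp add: mult.left_commute)
qed

lemma moment_finite_zero_dilate:
  assumes "c > 0" and "moment_finite G 0"
  shows "moment_finite (\<lambda>u. G (c * u)) 0"
proof -
  obtain C where C: "\<forall>u>0. (\<lambda>k::int. \<bar>G (exp (- real_of_int k) * u)\<bar>) summable_on UNIV \<and>
      (\<Sum>\<^sub>\<infinity>k::int. \<bar>G (exp (- real_of_int k) * u)\<bar>) \<le> C"
    using assms(2) unfolding moment_finite_zero_iff by blast
  have "(\<lambda>k::int. \<bar>G (c * (exp (- real_of_int k) * u))\<bar>) summable_on UNIV \<and>
      (\<Sum>\<^sub>\<infinity>k::int. \<bar>G (c * (exp (- real_of_int k) * u))\<bar>) \<le> C" if "u > 0" for u
    using C[rule_format, of "c * u"] that \<open>c > 0\<close> by (simp add: mult.left_commute)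
  then show ?thesis unfolding moment_finite_zero_iff by blast
qed

lemma moment_finite_zero_lincomb:
  assumes "moment_finite G 0" and "moment_finite H 0"
  shows "moment_finite (\<lambda>u. p * G u + q * H u) 0"
proof -
  obtain CG where CG: "\<forall>u>0. (\<lambda>k::int. \<bar>G (exp (- real_of_int k) * u)\<bar>) summable_on UNIV \<and>
      (\<Sum>\<^sub>\<infinity>k::int. \<bar>G (exp (- real_of_int k) * u)\<bar>) \<le> CG"
    using assms(1) unfolding moment_finite_zero_iff by blast
  obtain CH where CH: "\<forall>u>0. (\<lambda>k::int. \<bar>H (exp (- real_of_int k) * u)\<bar>) summable_on UNIV \<and>
      (\<Sum>\<^sub>\<infinity>k::int. \<bar>H (exp (- real_of_int k) * u)\<bar>) \<le> CH"
    using assms(2) unfolding moment_finite_zero_iff by blast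
  have "(\<lambda>k::int. \<bar>p * G (exp (- real_of_int k) * u) + q * H (exp (- real_of_int k) * u)\<bar>) summable_on UNIV \<and>
      (\<Sum>\<^sub>\<infinity>k::int. \<bar>p * G (exp (- real_of_int k) * u) + q * H (exp (- real_of_int k) * u)\<bar>)
        \<le> \<bar>p\<bar> * CG + \<bar>q\<bar> * CH" if "u > 0" for u
  proof
    let ?G = "\<lambda>k::int. \<bar>G (exp (- real_of_int k) * u)\<bar>" and ?H = "\<lambda>k::int. \<bar>H (exp (- real_of_int k) * u)\<bar>"
    have G: "?G summable_on UNIV" "infsum ?G UNIV \<le> CG" and H: "?H summable_on UNIV" "infsum ?H UNIV \<le> CH"
      using CG CH \<open>u > 0\<close> by auto
    have GH: "(\<lambda>k. \<bar>p\<bar> * ?G k + \<bar>q\<bar> * ?H k) summable_on UNIV"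
      by (intro summable_on_add summable_on_cmult_right G H)
    have le: "\<bar>p * G (exp (- real_of_int k) * u) + q * H (exp (- real_of_int k) * u)\<bar> \<le> \<bar>p\<bar> * ?G k + \<bar>q\<bar> * ?H k"
      for k by (metis abs_mult abs_triangle_ineq)
    show sum: "(\<lambda>k. \<bar>p * G (exp (- real_of_int k) * u) + q * H (exp (- real_of_int k) * u)\<bar>) summable_on UNIV"
      by (rule summable_on_comparison_test[OF GH]) (use le in auto)
    have "(\<Sum>\<^sub>\<infinity>k. \<bar>p * G (exp (- real_of_int k) * u) + q * H (exp (- real_of_int k) * u)\<bar>)
        \<le> (\<Sum>\<^sub>\<infinity>k. \<bar>p\<bar> * ?G k + \<bar>q\<bar> * ?H k)"
      by (rule infsum_mono[OF sum GH le])
    also have "\<dots> = \<bar>p\<bar> * infsum ?G UNIV + \<bar>q\<bar> * infsum ?H UNIV"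
      using infsum_add[OF summable_on_cmult_right[OF G(1)] summable_on_cmult_right[OF H(1)]]
      by (simp add: infsum_cmult_right')
    also have "\<dots> \<le> \<bar>p\<bar> * CG + \<bar>q\<bar> * CH"
      using G H by (intro add_mono mult_left_mono) auto
    finally show "(\<Sum>\<^sub>\<infinity>k. \<bar>p * G (exp (- real_of_int k) * u) + q * H (exp (- real_of_int k) * u)\<bar>)
        \<le> \<bar>p\<bar> * CG + \<bar>q\<bar> * CH" .
  qed
  then show ?thesis unfolding moment_finite_zero_iff by blast
qed

lemma moment_finite_of_log_support:
  assumes "\<nu> > 0" and "moment_finite K 0"
    and supp: "\<And>x. x > 0 \<Longrightarrow> K x \<noteq> 0 \<Longrightarrow> \<bar>ln x\<bar> \<le> R"
  shows "moment_finite K \<nu>"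
proof -
  obtain C where C: "\<forall>u>0. (\<lambda>k::int. \<bar>K (exp (- real_of_int k) * u)\<bar>) summable_on UNIV \<and>
      (\<Sum>\<^sub>\<infinity>k::int. \<bar>K (exp (- real_of_int k) * u)\<bar>) \<le> C"
    using assms(2) unfolding moment_finite_zero_iff by blast
  have "(\<lambda>k::int. \<bar>K (exp (- real_of_int k) * u)\<bar> * moment_weight \<nu> k u) summable_on UNIV \<and>
      (\<Sum>\<^sub>\<infinity>k::int. \<bar>K (exp (- real_of_int k) * u)\<bar> * moment_weight \<nu> k u) \<le> R powr \<nu> * C"
    if "u > 0" for u
  proof
    let ?K = "\<lambda>k::int. \<bar>K (exp (- real_of_int k) * u)\<bar>"
    have K: "?K summable_on UNIV" "infsum ?K UNIV \<le> C" using C \<open>u > 0\<close> by auto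
    have le: "?K k * moment_weight \<nu> k u \<le> R powr \<nu> * ?K k" for k
    proof (cases "K (exp (- real_of_int k) * u) = 0")
      case False
      have "\<bar>- real_of_int k + ln u\<bar> \<le> R"
        using supp[OF _ False] \<open>u > 0\<close> by (simp add: ln_mult)
      then have "\<bar>real_of_int k - ln u\<bar> powr \<nu> \<le> R powr \<nu>"
        using \<open>\<nu> > 0\<close> by (intro powr_mono2) auto
      then have "?K k * \<bar>real_of_int k - ln u\<bar> powr \<nu> \<le> ?K k * R powr \<nu>"
        by (rule mult_left_mono) simp
      then show ?thesis
        using \<open>\<nu> > 0\<close> by (simp add: moment_weight_def mult.commute[of "R powr \<nu>"])
    qed simp
    have RK: "(\<lambda>k. R powr \<nu> * ?K k) summable_on UNIV" by (intro summable_on_cmult_right K)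
    show sum: "(\<lambda>k. ?K k * moment_weight \<nu> k u) summable_on UNIV"
      by (rule summable_on_comparison_test[OF RK]) (use le in \<open>auto simp: moment_weight_def\<close>)
    have "(\<Sum>\<^sub>\<infinity>k. ?K k * moment_weight \<nu> k u) \<le> (\<Sum>\<^sub>\<infinity>k. R powr \<nu> * ?K k)"
      by (rule infsum_mono[OF sum RK le])
    also have "\<dots> \<le> R powr \<nu> * C"
      using K by (simp add: infsum_cmult_right' mult_left_mono)
    finally show "(\<Sum>\<^sub>\<infinity>k. ?K k * moment_weight \<nu> k u) \<le> R powr \<nu> * C" .
  qed
  then show ?thesis unfolding moment_finite_def by blast
qed

lemma abs_ln_mult_le_if_nonzero:
  fixes G :: "real \<Rightarrow> real" and a c x :: real
  assumes supp: "\<forall>u>0. G u \<noteq> 0 \<longrightarrow> u \<in> {exp (- a)..exp a}"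
    and "c > 0" and "x > 0" and "G (c * x) \<noteq> 0"
  shows "\<bar>ln c + ln x\<bar> \<le> a"
proof -
  have cx: "c * x > 0" using \<open>c > 0\<close> \<open>x > 0\<close> by (rule mult_pos_pos)
  then have "exp (- a) \<le> c * x" "c * x \<le> exp a" using supp assms(4) by auto
  then have "- a \<le> ln (c * x)" "ln (c * x) \<le> a"
    using ln_ge_iff[OF cx] ln_le_cancel_iff[OF cx exp_gt_zero] by auto
  then show ?thesis using assms by (simp add: ln_mult)
qed

lemma kernel_affine_combination_of_dilates:
  assumes "kernel G" and "kernel H" and "c > 0" and "d > 0" and "p + q = 1"
    and suppG: "\<forall>u>0. G u \<noteq> 0 \<longrightarrow> u \<in> {exp (- a)..exp a}"
    and suppH: "\<forall>u>0. H u \<noteq> 0 \<longrightarrow> u \<in> {exp (- b)..exp b}"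
  shows "kernel (\<lambda>u. p * G (c * u) + q * H (d * u))"
proof -
  let ?K = "\<lambda>u. p * G (c * u) + q * H (d * u)"
  have unit: "((\<lambda>k::int. ?K (exp (- real_of_int k) * u)) has_sum 1) UNIV" if "u > 0" for u
    using has_sum_add[OF has_sum_cmult_right[OF kernel_has_sum_one_dilate[OF \<open>kernel G\<close> \<open>c > 0\<close> that]]
        has_sum_cmult_right[OF kernel_has_sum_one_dilate[OF \<open>kernel H\<close> \<open>d > 0\<close> that]], of p q]
    by (simp add: \<open>p + q = 1\<close>)
  have M0: "moment_finite ?K 0"
    using assms(1-4) unfolding kernel_def
    by (intro moment_finite_zero_lincomb moment_finite_zero_dilate) auto
  have "\<bar>ln x\<bar> \<le> \<bar>a\<bar> + \<bar>b\<bar> + \<bar>ln c\<bar> + \<bar>ln d\<bar>" if "x > 0" "?K x \<noteq> 0" for x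
  proof -
    have "G (c * x) \<noteq> 0 \<or> H (d * x) \<noteq> 0" using that(2) by auto
    then show ?thesis
      using abs_ln_mult_le_if_nonzero[OF suppG \<open>c > 0\<close> \<open>x > 0\<close>]
        abs_ln_mult_le_if_nonzero[OF suppH \<open>d > 0\<close> \<open>x > 0\<close>]
      by (elim disjE) (smt (verit))+
  qed
  then have "moment_finite ?K 1" by (intro moment_finite_of_log_support[OF _ M0]) auto
  then show ?thesis using unit M0 unfolding kernel_def by (auto intro: exI[of _ 1])
qed

lemma dilated_sample_node:
  fixes G :: "real \<Rightarrow> real" and a c t w :: real and k :: int
  assumes supp: "\<forall>u>0. G u \<noteq> 0 \<longrightarrow> u \<in> {exp (- a)..exp a}"
    and "c > 0" and "t > 0" and "w > 0"
    and nonzero: "G (c * (exp (- real_of_int k) * t powr w)) \<noteq> 0"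
  shows "\<exists>s\<in>{ln c - a..ln c + a}. exp (real_of_int k / w) = t * exp (s / w)"
proof -
  define s where "s = real_of_int k - w * ln t"
  have "\<bar>ln c + ln (exp (- real_of_int k) * t powr w)\<bar> \<le> a"
    using abs_ln_mult_le_if_nonzero[OF supp \<open>c > 0\<close> _ nonzero] \<open>t > 0\<close> by simp
  moreover have "ln (exp (- real_of_int k) * t powr w) = - s"
    using \<open>t > 0\<close> by (simp add: s_def ln_mult ln_powr)
  ultimately have "s \<in> {ln c - a..ln c + a}" by auto
  moreover have "real_of_int k / w = ln t + s / w"
    using \<open>w > 0\<close> by (simp add: s_def field_simps)
  then have "exp (real_of_int k / w) = t * exp (s / w)"
    using \<open>t > 0\<close> by (simp add: exp_add)
  ultimately show ?thesis by blast
qed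

lemma eventually_mult_exp_div_near:
  fixes t \<delta> m :: real
  assumes "t > 0" and "\<delta> > 0"
  shows "\<forall>\<^sub>F w in at_top. \<forall>s. \<bar>s\<bar> \<le> m \<longrightarrow> \<bar>t * exp (s / w) - t\<bar> < \<delta>"
proof -
  have lim: "((\<lambda>w. t * exp (r / w)) \<longlongrightarrow> t) at_top" for r :: real
  proof -
    have "((\<lambda>w. r / w) \<longlongrightarrow> 0) at_top"
      by (intro tendsto_divide_0[OF tendsto_const] filterlim_at_top_imp_at_infinity filterlim_ident)
    then have "((\<lambda>w. t * exp (r / w)) \<longlongrightarrow> t * exp 0) at_top" by (intro tendsto_intros)
    then show ?thesis by simp
  qed
  have "\<forall>\<^sub>F w in at_top. t * exp (m / w) < t + \<delta>"
    by (rule order_tendstoD(2)[OF lim]) (use \<open>\<delta> > 0\<close> in simp)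
  moreover have "\<forall>\<^sub>F w in at_top. t - \<delta> < t * exp (- m / w)"
    by (rule order_tendstoD(1)[OF lim]) (use \<open>\<delta> > 0\<close> in simp)
  moreover have "\<forall>\<^sub>F w in at_top. (w::real) > 0" by (rule eventually_gt_at_top)
  ultimately show ?thesis
  proof eventually_elim
    case (elim w)
    show ?case
    proof (intro allI impI)
      fix s :: real
      assume "\<bar>s\<bar> \<le> m"
      then have "- m / w \<le> s / w" "s / w \<le> m / w"
        using \<open>w > 0\<close> divide_right_mono[of "- m" s w] divide_right_mono[of s m w]
        by (simp_all add: abs_le_iff)
      then have "t * exp (- m / w) \<le> t * exp (s / w)" "t * exp (s / w) \<le> t * exp (m / w)"
        using \<open>t > 0\<close> by simp_all
      then show "\<bar>t * exp (s / w) - t\<bar> < \<delta>" using elim by (simp add: abs_less_iff)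
    qed
  qed
qed

lemma eventually_at_left_mult_exp_div:
  fixes f :: "real \<Rightarrow> real" and t L \<epsilon> m :: real
  assumes "(f \<longlongrightarrow> L) (at_left t)" and "t > 0" and "\<epsilon> > 0"
  shows "\<forall>\<^sub>F w in at_top. \<forall>s\<in>{- m..<0}. \<bar>f (t * exp (s / w)) - L\<bar> \<le> \<epsilon>"
proof -
  obtain b where "b < t" and b: "\<And>y. b < y \<Longrightarrow> y < t \<Longrightarrow> \<bar>f y - L\<bar> < \<epsilon>"
    using tendstoD[OF assms(1) \<open>\<epsilon> > 0\<close>] eventually_at_left[of "t - 1" t] by (auto simp: dist_real_def)
  have "\<forall>\<^sub>F w in at_top. \<forall>s. \<bar>s\<bar> \<le> m \<longrightarrow> \<bar>t * exp (s / w) - t\<bar> < t - b"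
    using \<open>t > 0\<close> \<open>b < t\<close> by (intro eventually_mult_exp_div_near) auto
  moreover have "\<forall>\<^sub>F w in at_top. (w::real) > 0" by (rule eventually_gt_at_top)
  ultimately show ?thesis
  proof eventually_elim
    case (elim w)
    show ?case
    proof
      fix s assume s: "s \<in> {- m..<0}"
      then have "t * exp (s / w) < t"
        using \<open>t > 0\<close> \<open>w > 0\<close> by (simp add: divide_neg_pos)
      moreover have "b < t * exp (s / w)"
        using elim(1) s by (auto simp: abs_less_iff)
      ultimately show "\<bar>f (t * exp (s / w)) - L\<bar> \<le> \<epsilon>" using b by force
    qed
  qed
qed

lemma eventually_at_right_mult_exp_div:
  fixes f :: "real \<Rightarrow> real" and t L \<epsilon> m :: real
  assumes "(f \<longlongrightarrow> L) (at_right t)" and "t > 0" and "\<epsilon> > 0"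
  shows "\<forall>\<^sub>F w in at_top. \<forall>s\<in>{0<..m}. \<bar>f (t * exp (s / w)) - L\<bar> \<le> \<epsilon>"
proof -
  obtain d where "t < d" and d: "\<And>y. t < y \<Longrightarrow> y < d \<Longrightarrow> \<bar>f y - L\<bar> < \<epsilon>"
    using tendstoD[OF assms(1) \<open>\<epsilon> > 0\<close>] eventually_at_right[of t "t + 1"] by (auto simp: dist_real_def)
  have "\<forall>\<^sub>F w in at_top. \<forall>s. \<bar>s\<bar> \<le> m \<longrightarrow> \<bar>t * exp (s / w) - t\<bar> < d - t"
    using \<open>t > 0\<close> \<open>t < d\<close> by (intro eventually_mult_exp_div_near) auto
  moreover have "\<forall>\<^sub>F w in at_top. (w::real) > 0" by (rule eventually_gt_at_top)
  ultimately show ?thesis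
  proof eventually_elim
    case (elim w)
    show ?case
    proof
      fix s assume s: "s \<in> {0<..m}"
      then have "t < t * exp (s / w)"
        using \<open>t > 0\<close> \<open>w > 0\<close> by simp
      moreover have "t * exp (s / w) < d"
        using elim(1) s by (auto simp: abs_less_iff)
      ultimately show "\<bar>f (t * exp (s / w)) - L\<bar> \<le> \<epsilon>" using d by force
    qed
  qed
qed

lemma exp_sampling_dilate_tendsto:
  fixes G f :: "real \<Rightarrow> real" and a c t L B :: real
  assumes "kernel G" and supp: "\<forall>u>0. G u \<noteq> 0 \<longrightarrow> u \<in> {exp (- a)..exp a}"
    and "c > 0" and "t > 0" and bounded: "\<And>x. x > 0 \<Longrightarrow> \<bar>f x\<bar> \<le> B"
    and close: "\<And>\<epsilon>. \<epsilon> > 0 \<Longrightarrow>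
      \<forall>\<^sub>F w in at_top. \<forall>s\<in>{ln c - a..ln c + a}. \<bar>f (t * exp (s / w)) - L\<bar> \<le> \<epsilon>"
  shows "((\<lambda>w. exp_sampling (\<lambda>u. G (c * u)) w f t) \<longlongrightarrow> L) at_top"
proof -
  have "moment_finite (\<lambda>u. G (c * u)) 0"
    using \<open>kernel G\<close> \<open>c > 0\<close> by (simp add: kernel_def moment_finite_zero_dilate)
  then obtain C where C: "\<forall>u>0. (\<lambda>k::int. \<bar>G (c * (exp (- real_of_int k) * u))\<bar>) summable_on UNIV \<and>
      (\<Sum>\<^sub>\<infinity>k::int. \<bar>G (c * (exp (- real_of_int k) * u))\<bar>) \<le> C"
    unfolding moment_finite_zero_iff by blast
  show ?thesis unfolding exp_sampling_def
  proof (rule tendsto_infsum_weighted_average)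
    show "\<forall>\<^sub>F w in at_top. ((\<lambda>k::int. G (c * (exp (- real_of_int k) * t powr w))) has_sum 1) UNIV"
      using \<open>t > 0\<close> by (intro always_eventually allI kernel_has_sum_one_dilate[OF \<open>kernel G\<close> \<open>c > 0\<close>]) simp
    show "\<forall>\<^sub>F w in at_top. (\<lambda>k::int. \<bar>G (c * (exp (- real_of_int k) * t powr w))\<bar>) summable_on UNIV \<and>
        (\<Sum>\<^sub>\<infinity>k::int. \<bar>G (c * (exp (- real_of_int k) * t powr w))\<bar>) \<le> C"
      using C \<open>t > 0\<close> by (intro always_eventually allI) simp
    show "\<bar>f (exp (real_of_int k / w))\<bar> \<le> B" for w and k :: int
      by (rule bounded) simp
  next
    fix \<epsilon> :: real assume "\<epsilon> > 0"
    show "\<forall>\<^sub>F w in at_top. \<forall>k::int. G (c * (exp (- real_of_int k) * t powr w)) \<noteq> 0 \<longrightarrow>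
        \<bar>f (exp (real_of_int k / w)) - L\<bar> \<le> \<epsilon>"
      using close[OF \<open>\<epsilon> > 0\<close>] eventually_gt_at_top[of 0]
    proof eventually_elim
      case (elim w)
      show ?case
      proof (intro allI impI)
        fix k :: int
        assume "G (c * (exp (- real_of_int k) * t powr w)) \<noteq> 0"
        then obtain s where "s \<in> {ln c - a..ln c + a}" "exp (real_of_int k / w) = t * exp (s / w)"
          using dilated_sample_node[OF supp \<open>c > 0\<close> \<open>t > 0\<close>] elim(2) by blast
        then show "\<bar>f (exp (real_of_int k / w)) - L\<bar> \<le> \<epsilon>" using elim(1) by simp
      qed
    qed
  qed
qed

lemma exp_sampling_dilate_tendsto_at_left:
  fixes G f :: "real \<Rightarrow> real" and a c t L B :: real
  assumes "kernel G" and supp: "\<forall>u>0. G u \<noteq> 0 \<longrightarrow> u \<in> {exp (- a)..exp a}"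
    and "c > 0" and "t > 0" and bounded: "\<And>x. x > 0 \<Longrightarrow> \<bar>f x\<bar> \<le> B"
    and "ln c + a < 0" and "(f \<longlongrightarrow> L) (at_left t)"
  shows "((\<lambda>w. exp_sampling (\<lambda>u. G (c * u)) w f t) \<longlongrightarrow> L) at_top"
proof (rule exp_sampling_dilate_tendsto[OF \<open>kernel G\<close> supp \<open>c > 0\<close> \<open>t > 0\<close> bounded])
  fix \<epsilon> :: real assume "\<epsilon> > 0"
  from eventually_at_left_mult_exp_div[OF \<open>(f \<longlongrightarrow> L) (at_left t)\<close> \<open>t > 0\<close> this, of "a - ln c"]
  show "\<forall>\<^sub>F w in at_top. \<forall>s\<in>{ln c - a..ln c + a}. \<bar>f (t * exp (s / w)) - L\<bar> \<le> \<epsilon>"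
    by eventually_elim (use \<open>ln c + a < 0\<close> in auto)
qed

lemma exp_sampling_dilate_tendsto_at_right:
  fixes G f :: "real \<Rightarrow> real" and a c t L B :: real
  assumes "kernel G" and supp: "\<forall>u>0. G u \<noteq> 0 \<longrightarrow> u \<in> {exp (- a)..exp a}"
    and "c > 0" and "t > 0" and bounded: "\<And>x. x > 0 \<Longrightarrow> \<bar>f x\<bar> \<le> B"
    and "ln c - a > 0" and "(f \<longlongrightarrow> L) (at_right t)"
  shows "((\<lambda>w. exp_sampling (\<lambda>u. G (c * u)) w f t) \<longlongrightarrow> L) at_top"
proof (rule exp_sampling_dilate_tendsto[OF \<open>kernel G\<close> supp \<open>c > 0\<close> \<open>t > 0\<close> bounded])
  fix \<epsilon> :: real assume "\<epsilon> > 0"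
  from eventually_at_right_mult_exp_div[OF \<open>(f \<longlongrightarrow> L) (at_right t)\<close> \<open>t > 0\<close> this, of "ln c + a"]
  show "\<forall>\<^sub>F w in at_top. \<forall>s\<in>{ln c - a..ln c + a}. \<bar>f (t * exp (s / w)) - L\<bar> \<le> \<epsilon>"
    by eventually_elim (use \<open>ln c - a > 0\<close> in auto)
qed

lemma exp_sampling_lincomb:
  fixes G H f :: "real \<Rightarrow> real" and p q t B :: real
  assumes "moment_finite G 0" and "moment_finite H 0"
    and "t > 0" and bounded: "\<And>x. x > 0 \<Longrightarrow> \<bar>f x\<bar> \<le> B"
  shows "exp_sampling (\<lambda>u. p * G u + q * H u) w f t = p * exp_sampling G w f t + q * exp_sampling H w f t"
proof -
  have summable: "(\<lambda>k::int. F (exp (- real_of_int k) * t powr w) * f (exp (real_of_int k / w))) summable_on UNIV"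
    if "moment_finite F 0" for F
  proof (rule summable_on_mult_bounded)
    show "(\<lambda>k::int. \<bar>F (exp (- real_of_int k) * t powr w)\<bar>) summable_on UNIV"
      using that \<open>t > 0\<close> unfolding moment_finite_zero_iff by auto
    show "\<bar>f (exp (real_of_int k / w))\<bar> \<le> B" for k :: int by (rule bounded) simp
  qed
  show ?thesis unfolding exp_sampling_def
    using infsum_add[OF summable_on_cmult_right[OF summable[OF assms(1)], where c = p]
        summable_on_cmult_right[OF summable[OF assms(2)], where c = q]]
    by (simp add: infsum_cmult_right' distrib_right mult.assoc)
qed

theorem theorem11:
  fixes a b \<alpha> :: real and Ka Kb K :: "real \<Rightarrow> real"
  assumes "a > 0" and "b > 0"
    and "kernel Ka" and "kernel Kb"
    and "continuous_on {0<..} Ka" and "continuous_on {0<..} Kb"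
    and "\<forall>u>0. Ka u \<noteq> 0 \<longrightarrow> u \<in> {exp (- a)..exp a}"
    and "\<forall>u>0. Kb u \<noteq> 0 \<longrightarrow> u \<in> {exp (- b)..exp b}"
    and "K = (\<lambda>u. (1 - \<alpha>) * Ka (2 * u * exp (- a - 1)) + \<alpha> * Kb (2 * u * exp b))"
  shows "kernel K \<and> K 1 = 0 \<and>
    (\<forall>(f :: real \<Rightarrow> real) t fp fm.
       (\<exists>B. \<forall>x>0. \<bar>f x\<bar> \<le> B) \<longrightarrow> t > 0 \<longrightarrow>
       (f \<longlongrightarrow> fp) (at_right t) \<longrightarrow> (f \<longlongrightarrow> fm) (at_left t) \<longrightarrow> fp \<noteq> fm \<longrightarrow>
       ((\<lambda>w. exp_sampling K w f t) \<longlongrightarrow> \<alpha> * fp + (1 - \<alpha>) * fm) at_top)"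
proof -
  define c d where "c = 2 * exp (- a - 1)" and "d = 2 * exp b"
  have "c > 0" "d > 0" by (simp_all add: c_def d_def)
  have "ln c + a < 0" "ln d - b > 0"
    using ln_2_less_1 by (simp_all add: c_def d_def ln_mult)
  have K: "K = (\<lambda>u. (1 - \<alpha>) * Ka (c * u) + \<alpha> * Kb (d * u))"
    using assms(9) by (simp add: c_def d_def mult_ac)
  have "kernel K"
    unfolding K by (rule kernel_affine_combination_of_dilates[OF assms(3,4) \<open>c > 0\<close> \<open>d > 0\<close> _ assms(7,8)]) simp
  moreover have "K 1 = 0"
    using abs_ln_mult_le_if_nonzero[OF assms(7) \<open>c > 0\<close>, of 1] abs_ln_mult_le_if_nonzero[OF assms(8) \<open>d > 0\<close>, of 1]
      \<open>ln c + a < 0\<close> \<open>ln d - b > 0\<close> unfolding K by force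
  moreover have "((\<lambda>w. exp_sampling K w f t) \<longlongrightarrow> \<alpha> * fp + (1 - \<alpha>) * fm) at_top"
    if "\<forall>x>0. \<bar>f x\<bar> \<le> B" "t > 0" "(f \<longlongrightarrow> fp) (at_right t)" "(f \<longlongrightarrow> fm) (at_left t)" for f t fp fm B
  proof -
    have "((\<lambda>w. (1 - \<alpha>) * exp_sampling (\<lambda>u. Ka (c * u)) w f t + \<alpha> * exp_sampling (\<lambda>u. Kb (d * u)) w f t)
        \<longlongrightarrow> (1 - \<alpha>) * fm + \<alpha> * fp) at_top"
      using that \<open>c > 0\<close> \<open>d > 0\<close> \<open>ln c + a < 0\<close> \<open>ln d - b > 0\<close> assms(3,4,7,8)
      by (intro tendsto_add tendsto_mult_left exp_sampling_dilate_tendsto_at_left exp_sampling_dilate_tendsto_at_right) auto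
    moreover have "exp_sampling K w f t = (1 - \<alpha>) * exp_sampling (\<lambda>u. Ka (c * u)) w f t + \<alpha> * exp_sampling (\<lambda>u. Kb (d * u)) w f t" for w
      unfolding K using assms(3,4) that(1,2) \<open>c > 0\<close> \<open>d > 0\<close>
      by (intro exp_sampling_lincomb moment_finite_zero_dilate) (auto simp: kernel_def)
    ultimately show ?thesis by (simp add: add.commute)
  qed
  ultimately show ?thesis by blast
qed

end
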